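(* Let $(G,k)$ be an instance of PITVD and let $P=(v_1,v_2,\dots,v_\ell)$ be a degree-2-tail in $G$ with $\ell\ge3$ vertices, and let $Z=\{v_3,v_4,\dots,v_\ell\}$. Then $(G,k)$ is a yes-instance of PITVD if and only if $(G-Z,k)$ is a yes-instance of PITVD.
   Context: PITVD: the input is an undirected multigraph $G$ (no self-loops) and an integer $k$; the question is whether there exists $X\subseteq V(G)$ with $|X|\le k$ such that $G-X$ is a simple graph and every connected component of $G-X$ is a proper interval graph or a tree. A path $(v_1,\dots,v_\ell)$ (distinct vertices, consecutive ones adjacent) is a degree-2-path if every internal vertex has degree exactly $2$ in $G$; it is a degree-2-tail if moreover $d_G(v_1)>2$ and $d_G(v_\ell)=1$. *)

theory Defs
  imports Main "HOL-Library.Multiset" Complex_Main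
begin

text \<open>A finite undirected multigraph without self-loops on vertex set V, given by an
edge-multiplicity function m (m u v = number of parallel edges between u and v).\<close>
definition multigraph :: "'a set \<Rightarrow> ('a \<Rightarrow> 'a \<Rightarrow> nat) \<Rightarrow> bool" where
  "multigraph V m \<longleftrightarrow> finite V \<and> (\<forall>u v. m u v = m v u) \<and> (\<forall>v. m v v = 0)
     \<and> (\<forall>u v. 0 < m u v \<longrightarrow> u \<in> V \<and> v \<in> V)"

definition adj :: "('a \<Rightarrow> 'a \<Rightarrow> nat) \<Rightarrow> 'a \<Rightarrow> 'a \<Rightarrow> bool" where
  "adj m u v \<longleftrightarrow> 0 < m u v"

definition deg :: "'a set \<Rightarrow> ('a \<Rightarrow> 'a \<Rightarrow> nat) \<Rightarrow> 'a \<Rightarrow> nat" where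
  "deg V m v = (\<Sum>u\<in>V. m v u)"

definition del_vs :: "('a \<Rightarrow> 'a \<Rightarrow> nat) \<Rightarrow> 'a set \<Rightarrow> 'a \<Rightarrow> 'a \<Rightarrow> nat" where
  "del_vs m X u v = (if u \<in> X \<or> v \<in> X then 0 else m u v)"

definition simple_mg :: "('a \<Rightarrow> 'a \<Rightarrow> nat) \<Rightarrow> bool" where
  "simple_mg m \<longleftrightarrow> (\<forall>u v. m u v \<le> 1)"

definition component :: "'a set \<Rightarrow> ('a \<Rightarrow> 'a \<Rightarrow> nat) \<Rightarrow> 'a set \<Rightarrow> bool" where
  "component V m C \<longleftrightarrow> (\<exists>v\<in>V. C = {u \<in> V. (adj m)\<^sup>*\<^sup>* v u})"

definition proper_interval :: "('a \<Rightarrow> 'a \<Rightarrow> nat) \<Rightarrow> 'a set \<Rightarrow> bool" where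
  "proper_interval m C \<longleftrightarrow> (\<exists>l r :: 'a \<Rightarrow> real.
     (\<forall>v\<in>C. l v \<le> r v) \<and>
     (\<forall>u\<in>C. \<forall>v\<in>C. u \<noteq> v \<longrightarrow> (adj m u v \<longleftrightarrow> {l u..r u} \<inter> {l v..r v} \<noteq> {})) \<and>
     (\<forall>u\<in>C. \<forall>v\<in>C. \<not> ({l v..r v} \<subset> {l u..r u})))"

definition is_cycle :: "('a \<Rightarrow> 'a \<Rightarrow> nat) \<Rightarrow> 'a set \<Rightarrow> 'a list \<Rightarrow> bool" where
  "is_cycle m C cs \<longleftrightarrow> 3 \<le> length cs \<and> distinct cs \<and> set cs \<subseteq> C \<and>
     (\<forall>i < length cs. adj m (cs ! i) (cs ! ((i + 1) mod length cs)))"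

definition is_tree :: "('a \<Rightarrow> 'a \<Rightarrow> nat) \<Rightarrow> 'a set \<Rightarrow> bool" where
  "is_tree m C \<longleftrightarrow> C \<noteq> {} \<and>
     (\<forall>u\<in>C. \<forall>v\<in>C. (\<lambda>x y. x \<in> C \<and> y \<in> C \<and> adj m x y)\<^sup>*\<^sup>* u v) \<and>
     \<not> (\<exists>cs. is_cycle m C cs)"

definition pitvd_yes :: "'a set \<Rightarrow> ('a \<Rightarrow> 'a \<Rightarrow> nat) \<Rightarrow> nat \<Rightarrow> bool" where
  "pitvd_yes V m k \<longleftrightarrow> (\<exists>X \<subseteq> V. card X \<le> k \<and> simple_mg (del_vs m X) \<and>
     (\<forall>C. component (V - X) (del_vs m X) C \<longrightarrow>
          proper_interval (del_vs m X) C \<or> is_tree (del_vs m X) C))"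

definition deg2_path :: "'a set \<Rightarrow> ('a \<Rightarrow> 'a \<Rightarrow> nat) \<Rightarrow> 'a list \<Rightarrow> bool" where
  "deg2_path V m P \<longleftrightarrow> P \<noteq> [] \<and> distinct P \<and> set P \<subseteq> V \<and>
     (\<forall>i. i + 1 < length P \<longrightarrow> adj m (P ! i) (P ! (i + 1))) \<and>
     (\<forall>i. 0 < i \<and> i + 1 < length P \<longrightarrow> deg V m (P ! i) = 2)"

definition deg2_tail :: "'a set \<Rightarrow> ('a \<Rightarrow> 'a \<Rightarrow> nat) \<Rightarrow> 'a list \<Rightarrow> bool" where
  "deg2_tail V m P \<longleftrightarrow> deg2_path V m P \<and> deg V m (hd P) > 2 \<and> deg V m (last P) = 1"

end

theory Submission
  imports Defs
begin

(* Deleting vertices preserves the property that every component is a proper interval graph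
   or a tree, so a solution X for G gives the solution X - Z for G - Z.

   Conversely, let X be a solution for G - Z. Each v_i with i >= 2 has degree at most 2 and
   is adjacent to its neighbours on the path, so it has no other edges and no parallel ones;
   hence G - X is simple. A component of G - X avoiding Z is a component of G - Z - X. A
   component meeting Z is a subpath of the tail if v_1 or v_2 lies in X; otherwise it is the
   component C0 of v_2 in G - Z - X with the path Z attached at v_2. No tail vertex lies on a
   cycle, so if C0 is a tree, so is the whole component. If C0 is a proper interval graph,
   then v_2 is pendant in C0 (its only neighbour is v_1), so either v_1 and v_2 have the same
   interval and C0 = {v_1, v_2}, making the component the whole tail, or after possibly
   mirroring the model the interval of v_2 is the rightmost one, and Z can be appended as a
   chain of unit intervals to its right. *)

lemma set_drop_eq_nth_image: "set (drop n xs) = (!) xs ` {n..<length xs}"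
proof -
  have "drop n xs = map ((!) xs) [n..<length xs]"
    by (simp add: list_eq_iff_nth_eq)
  then show ?thesis by simp
qed

lemma adj_del_vs: "adj (del_vs m X) u v \<longleftrightarrow> u \<notin> X \<and> v \<notin> X \<and> adj m u v"
  by (simp add: adj_def del_vs_def)

lemma del_vs_del_vs: "del_vs (del_vs m X) Y = del_vs m (X \<union> Y)"
  by (auto simp: del_vs_def fun_eq_iff)

lemma multigraph_del_vs: "multigraph V m \<Longrightarrow> multigraph (V - X) (del_vs m X)"
  unfolding multigraph_def del_vs_def by auto

lemma component_of: "v \<in> W \<Longrightarrow> component W E {u \<in> W. (adj E)\<^sup>*\<^sup>* v u}"
  unfolding component_def by blast

definition proper_interval_model ::
  "('a \<Rightarrow> 'a \<Rightarrow> nat) \<Rightarrow> 'a set \<Rightarrow> ('a \<Rightarrow> real) \<Rightarrow> ('a \<Rightarrow> real) \<Rightarrow> bool" where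
  "proper_interval_model E C l r \<longleftrightarrow> (\<forall>v\<in>C. l v \<le> r v) \<and>
     (\<forall>u\<in>C. \<forall>v\<in>C. u \<noteq> v \<longrightarrow> (adj E u v \<longleftrightarrow> l u \<le> r v \<and> l v \<le> r u)) \<and>
     (\<forall>u\<in>C. \<forall>v\<in>C. l u \<le> l v \<and> r v \<le> r u \<longrightarrow> l u = l v \<and> r u = r v)"

lemma proper_interval_iff_model:
  "proper_interval E C \<longleftrightarrow> (\<exists>l r. proper_interval_model E C l r)"
proof -
  have "proper_interval_model E C l r \<longleftrightarrow>
      (\<forall>v\<in>C. l v \<le> r v) \<and>
      (\<forall>u\<in>C. \<forall>v\<in>C. u \<noteq> v \<longrightarrow> (adj E u v \<longleftrightarrow> {l u..r u} \<inter> {l v..r v} \<noteq> {})) \<and>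
      (\<forall>u\<in>C. \<forall>v\<in>C. \<not> {l v..r v} \<subset> {l u..r u})" for l r :: "'a \<Rightarrow> real"
  proof (cases "\<forall>v\<in>C. l v \<le> r v")
    case True
    then have "{l u..r u} \<inter> {l v..r v} \<noteq> {} \<longleftrightarrow> l u \<le> r v \<and> l v \<le> r u"
      "\<not> {l v..r v} \<subset> {l u..r u} \<longleftrightarrow> (l u \<le> l v \<and> r v \<le> r u \<longrightarrow> l u = l v \<and> r u = r v)"
      if "u \<in> C" "v \<in> C" for u v
      using that by (auto simp: atLeastatMost_psubset_iff)
    then show ?thesis
      unfolding proper_interval_model_def by simp
  qed (unfold proper_interval_model_def, blast)
  then show ?thesis
    unfolding proper_interval_def by simp
qed

lemma proper_interval_model_mirror:
  "proper_interval_model E C l r \<Longrightarrow> proper_interval_model E C (\<lambda>x. - r x) (\<lambda>x. - l x)"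
  unfolding proper_interval_model_def by auto

lemma proper_interval_model_cong:
  assumes "proper_interval_model E C l r" "C' \<subseteq> C"
    and "\<And>u v. u \<in> C' \<Longrightarrow> v \<in> C' \<Longrightarrow> adj E' u v \<longleftrightarrow> adj E u v"
    and "\<And>v. v \<in> C' \<Longrightarrow> l' v = l v \<and> r' v = r v"
  shows "proper_interval_model E' C' l' r'"
  using assms unfolding proper_interval_model_def by (simp add: subset_iff)

lemma proper_interval_subset:
  assumes "proper_interval E C" "C' \<subseteq> C"
    and "\<And>u v. u \<in> C' \<Longrightarrow> v \<in> C' \<Longrightarrow> adj E' u v \<longleftrightarrow> adj E u v"
  shows "proper_interval E' C'"
proof -
  obtain l r where "proper_interval_model E C l r"
    using assms(1) unfolding proper_interval_iff_model by blast
  then have "proper_interval_model E' C' l r"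
    by (rule proper_interval_model_cong[OF _ assms(2,3)]) simp_all
  then show ?thesis
    unfolding proper_interval_iff_model by blast
qed

lemma proper_interval_model_Un:
  assumes "proper_interval_model E A l r" "proper_interval_model E B l r"
    and sym: "\<And>u v. adj E u v \<longleftrightarrow> adj E v u"
    and cross: "\<And>a b. a \<in> A \<Longrightarrow> b \<in> B \<Longrightarrow> adj E a b \<longleftrightarrow> l b \<le> r a"
    and left: "\<And>a b. a \<in> A \<Longrightarrow> b \<in> B \<Longrightarrow> l a < l b \<and> r a < r b"
  shows "proper_interval_model E (A \<union> B) l r"
  using assms unfolding proper_interval_model_def
  by (smt (verit, best) Un_iff)

lemma path_interval_model:
  assumes inj: "inj_on f I"
    and adj: "\<And>i j. i \<in> I \<Longrightarrow> j \<in> I \<Longrightarrow> adj E (f i) (f j) \<longleftrightarrow> i = Suc j \<or> j = Suc i"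
  shows "proper_interval_model E (f ` I)
    (\<lambda>x. c + real (inv_into I f x)) (\<lambda>x. c + real (inv_into I f x) + 1)"
  unfolding proper_interval_model_def
  by (auto simp: inv_into_f_f[OF inj] adj inj_on_eq_iff[OF inj])

lemma is_cycle_mono:
  "is_cycle E C cs \<Longrightarrow> adj E \<le> adj E' \<Longrightarrow> set cs \<subseteq> C' \<Longrightarrow> is_cycle E' C' cs"
  unfolding is_cycle_def by auto

lemma is_cycle_cong:
  assumes "\<And>u v. u \<in> C \<Longrightarrow> v \<in> C \<Longrightarrow> adj E' u v \<longleftrightarrow> adj E u v"
  shows "is_cycle E' C cs \<longleftrightarrow> is_cycle E C cs"
proof -
  have "cs ! i \<in> C" "cs ! ((i + 1) mod length cs) \<in> C"
    if "set cs \<subseteq> C" "i < length cs" for i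
  proof -
    have "(i + 1) mod length cs < length cs"
      using that(2) by (intro mod_less_divisor) auto
    then show "cs ! i \<in> C" "cs ! ((i + 1) mod length cs) \<in> C"
      using that nth_mem by blast+
  qed
  then show ?thesis
    unfolding is_cycle_def using assms by auto
qed

lemma is_tree_cong:
  assumes "\<And>u v. u \<in> C \<Longrightarrow> v \<in> C \<Longrightarrow> adj E' u v \<longleftrightarrow> adj E u v"
  shows "is_tree E' C \<longleftrightarrow> is_tree E C"
proof -
  have "(\<lambda>x y. x \<in> C \<and> y \<in> C \<and> adj E' x y) = (\<lambda>x y. x \<in> C \<and> y \<in> C \<and> adj E x y)"
    using assms by (auto simp: fun_eq_iff)
  then show ?thesis
    unfolding is_tree_def using is_cycle_cong[OF assms] by simp
qed

lemma is_cycle_two_neighbours: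
  assumes cyc: "is_cycle E C cs" and x: "x \<in> set cs" and sym: "\<And>a b. adj E a b \<longleftrightarrow> adj E b a"
  shows "\<exists>a b. a \<in> set cs \<and> b \<in> set cs \<and> a \<noteq> b \<and> adj E x a \<and> adj E x b"
proof -
  let ?n = "length cs"
  obtain j where j: "j < ?n" "cs ! j = x"
    using x by (auto simp: in_set_conv_nth)
  have n: "3 \<le> ?n" and dist: "distinct cs" and succ: "\<forall>i < ?n. adj E (cs ! i) (cs ! ((i + 1) mod ?n))"
    using cyc unfolding is_cycle_def by auto
  define p where "p = (if j = 0 then ?n - 1 else j - 1)"
  have p: "p < ?n" "(p + 1) mod ?n = j"
    using j n by (auto simp: p_def)
  have s: "(j + 1) mod ?n < ?n" "(j + 1) mod ?n \<noteq> p"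
    using j n unfolding p_def by (auto simp: mod_if)
  have "adj E x (cs ! ((j + 1) mod ?n))" "adj E x (cs ! p)"
    using succ j p sym by force+
  moreover have "cs ! ((j + 1) mod ?n) \<noteq> cs ! p"
    using s p(1) nth_eq_iff_index_eq[OF dist] by blast
  ultimately show ?thesis
    using s(1) p(1) nth_mem by blast
qed

context
  fixes W :: "'a set" and E :: "'a \<Rightarrow> 'a \<Rightarrow> nat"
  assumes mg: "multigraph W E"
begin

lemma adj_commute: "adj E x y \<longleftrightarrow> adj E y x"
  using mg by (simp add: multigraph_def adj_def)

lemma adj_in_vertices: "adj E x y \<Longrightarrow> x \<in> W \<and> y \<in> W"
  using mg unfolding multigraph_def adj_def by blast

lemma adj_irrefl: "\<not> adj E x x"
  using mg by (simp add: multigraph_def adj_def)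

lemma reach_commute: "(adj E)\<^sup>*\<^sup>* x y \<Longrightarrow> (adj E)\<^sup>*\<^sup>* y x"
  by (metis adj_commute sympI symp_rtranclp sympD)

lemma reach_in_vertices: "(adj E)\<^sup>*\<^sup>* x y \<Longrightarrow> x \<in> W \<Longrightarrow> y \<in> W"
  by (induction rule: rtranclp_induct) (auto dest: adj_in_vertices)

lemma component_eq_reach:
  assumes "component W E C" "x \<in> C"
  shows "C = {u \<in> W. (adj E)\<^sup>*\<^sup>* x u}"
proof -
  obtain v where v: "v \<in> W" "C = {u \<in> W. (adj E)\<^sup>*\<^sup>* v u}"
    using assms(1) unfolding component_def by blast
  then have "(adj E)\<^sup>*\<^sup>* x v"
    using assms(2) reach_commute by blast
  then show ?thesis
    using v assms(2) by (auto intro: rtranclp_trans)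
qed

lemma component_reach_closed:
  "component W E C \<Longrightarrow> x \<in> C \<Longrightarrow> (adj E)\<^sup>*\<^sup>* x y \<Longrightarrow> y \<in> C"
  using component_eq_reach reach_in_vertices by blast

lemma component_adj_closed: "component W E C \<Longrightarrow> x \<in> C \<Longrightarrow> adj E x y \<Longrightarrow> y \<in> C"
  using component_reach_closed by blast

lemma component_eqI:
  assumes comp: "component W E C" and z: "z \<in> C" "z \<in> S" and s: "s \<in> S"
    and closed: "\<And>x y. x \<in> S \<Longrightarrow> adj E x y \<Longrightarrow> y \<in> S"
    and reach: "\<And>a. a \<in> S \<Longrightarrow> (adj E)\<^sup>*\<^sup>* s a"
  shows "C = S"
proof
  have "(adj E)\<^sup>*\<^sup>* z y \<Longrightarrow> y \<in> S" for y
    by (induction rule: rtranclp_induct) (use z closed in auto)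
  then show "C \<subseteq> S"
    using component_eq_reach[OF comp z(1)] by blast
  have "s \<in> C"
    using component_reach_closed[OF comp z(1)] reach_commute reach z(2) by blast
  then show "S \<subseteq> C"
    using component_reach_closed[OF comp] reach by blast
qed

lemma component_connected:
  assumes comp: "component W E C" and "u \<in> C" "w \<in> C"
  shows "(\<lambda>x y. x \<in> C \<and> y \<in> C \<and> adj E x y)\<^sup>*\<^sup>* u w"
proof -
  have "(adj E)\<^sup>*\<^sup>* u x \<Longrightarrow> (\<lambda>x y. x \<in> C \<and> y \<in> C \<and> adj E x y)\<^sup>*\<^sup>* u x \<and> x \<in> C" for x
    by (induction rule: rtranclp_induct)
      (use \<open>u \<in> C\<close> component_adj_closed[OF comp] in \<open>auto intro: rtranclp.rtrancl_into_rtrancl\<close>)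
  then show ?thesis
    using component_eq_reach[OF comp \<open>u \<in> C\<close>] \<open>w \<in> C\<close> by blast
qed

lemma component_del_vs_disjoint:
  assumes comp: "component W E C" and disj: "C \<inter> Y = {}"
  shows "component (W - Y) (del_vs E Y) C"
proof -
  obtain v where v: "v \<in> W" "C = {u \<in> W. (adj E)\<^sup>*\<^sup>* v u}"
    using comp unfolding component_def by blast
  then have "v \<in> C" by simp
  have sub: "(\<lambda>x y. x \<in> C \<and> y \<in> C \<and> adj E x y) \<le> adj (del_vs E Y)"
    using disj by (auto simp: adj_del_vs)
  have inside: "(adj (del_vs E Y))\<^sup>*\<^sup>* v u" if "u \<in> C" for u
    using predicate2D[OF rtranclp_mono[OF sub] component_connected[OF comp \<open>v \<in> C\<close> that]] .
  have sup: "adj (del_vs E Y) \<le> adj E"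
    by (auto simp: adj_del_vs)
  have outside: "(adj E)\<^sup>*\<^sup>* v u" if "(adj (del_vs E Y))\<^sup>*\<^sup>* v u" for u
    using predicate2D[OF rtranclp_mono[OF sup] that] .
  have "C = {u \<in> W - Y. (adj (del_vs E Y))\<^sup>*\<^sup>* v u}"
    using v disj inside outside by blast
  then show ?thesis
    using \<open>v \<in> C\<close> disj v(1) component_of[of v "W - Y"] by blast
qed

lemma mult_eq_indicator_if_deg_le:
  assumes N: "N \<subseteq> W" "\<And>y. y \<in> N \<Longrightarrow> adj E u y" and deg: "deg W E u \<le> card N"
  shows "E u y = (if y \<in> N then 1 else 0)"
proof -
  have finW: "finite W" and finN: "finite N"
    using mg N(1) finite_subset unfolding multigraph_def by auto
  have sum_le: "sum (E u) S \<le> card N" if "S \<subseteq> W" for S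
  proof -
    have "sum (E u) S \<le> sum (E u) W"
      by (rule sum_mono2[OF finW that]) simp
    then show ?thesis
      using deg unfolding deg_def by simp
  qed
  have card_le: "card S \<le> sum (E u) S" if "S \<subseteq> N" for S
    using sum_mono[of S "\<lambda>_. 1" "E u"] N(2) that by (auto simp: adj_def Suc_le_eq)
  show ?thesis
  proof (cases "y \<in> N")
    case True
    then have "sum (E u) N = E u y + sum (E u) (N - {y})"
      using finN by (simp add: sum.remove)
    moreover have "card (N - {y}) = card N - 1"
      using True finN by simp
    moreover have "0 < E u y" "0 < card N"
      using True N(2) finN card_gt_0_iff unfolding adj_def by blast+
    ultimately show ?thesis
      using True sum_le[OF N(1)] card_le[of "N - {y}"] by simp
  next
    case False
    show ?thesis
    proof (cases "y \<in> W")
      case True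
      then have "E u y + sum (E u) N \<le> card N"
        using sum_le[of "insert y N"] N(1) False finN by simp
      then show ?thesis
        using False card_le[of N] by simp
    next
      case False
      then show ?thesis
        using adj_in_vertices \<open>y \<notin> N\<close> unfolding adj_def by auto
    qed
  qed
qed

lemma pendant_rightmost:
  assumes comp: "component W E C" and v: "v \<in> C"
    and pendant: "\<And>y. adj E v y \<longleftrightarrow> y = u"
    and model: "proper_interval_model E C l r" and left: "l u < l v"
  shows "l v < r v" and "\<And>w. w \<in> C \<Longrightarrow> w \<noteq> v \<Longrightarrow> r w < r v"
proof -
  have u: "u \<in> C"
    using component_adj_closed[OF comp v] pendant by blast
  have lr: "\<And>x. x \<in> C \<Longrightarrow> l x \<le> r x"
    and iv: "\<And>x y. x \<in> C \<Longrightarrow> y \<in> C \<Longrightarrow> x \<noteq> y \<Longrightarrow> adj E x y \<longleftrightarrow> l x \<le> r y \<and> l y \<le> r x"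
    and nest: "\<And>x y. x \<in> C \<Longrightarrow> y \<in> C \<Longrightarrow> l x \<le> l y \<Longrightarrow> r y \<le> r x \<Longrightarrow> l x = l y"
    using model unfolding proper_interval_model_def by blast+
  have ru: "r u < r v"
    using nest[OF u v] left by force
  have "l v \<le> r u"
    using iv[OF v u] pendant left by force
  with ru show lv: "l v < r v"
    by simp
  have far: "r w < l v" if "(adj E)\<^sup>*\<^sup>* v w" "w \<noteq> u" "w \<noteq> v" for w
    using that
  proof (induction rule: rtranclp_induct)
    case (step x y)
    have x: "x \<in> C" and y: "y \<in> C"
      using component_reach_closed[OF comp v] step.hyps by (auto intro: rtranclp.rtrancl_into_rtrancl)
    have "x \<noteq> v"
      using pendant step by auto
    then have "r x < r v"
      using step.IH ru lv by (cases "x = u") auto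
    moreover have "l y \<le> r x"
      using iv[OF x y] step.hyps(2) adj_irrefl by blast
    moreover have "\<not> adj E y v"
      using pendant step.prems adj_commute by blast
    ultimately show ?case
      using iv[OF y v] step.prems by auto
  qed simp
  show "r w < r v" if "w \<in> C" "w \<noteq> v" for w
  proof (cases "w = u")
    case False
    then have "r w < l v"
      using far component_eq_reach[OF comp v] that by blast
    then show ?thesis
      using lv by simp
  qed (use ru in simp)
qed

lemma pendant_twin_component:
  assumes comp: "component W E C" and v: "v \<in> C"
    and pendant: "\<And>y. adj E v y \<longleftrightarrow> y = u"
    and model: "proper_interval_model E C l r" and twins: "l u = l v" "r u = r v"
  shows "C = {u, v}"
proof (rule component_eqI[OF comp v])
  have u: "u \<in> C"
    using component_adj_closed[OF comp v] pendant by blast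
  show "y \<in> {u, v}" if "x \<in> {u, v}" "adj E x y" for x y
  proof (rule ccontr)
    assume y: "y \<notin> {u, v}"
    have "y \<in> C"
      using component_adj_closed[OF comp] that u v by blast
    then have "adj E v y"
      using model that u v twins y unfolding proper_interval_model_def by auto
    then show False
      using pendant y by simp
  qed
  show "(adj E)\<^sup>*\<^sup>* v a" if "a \<in> {u, v}" for a
    using that pendant by auto
qed simp_all

lemma pendant_interval_model:
  assumes comp: "component W E C" and v: "v \<in> C"
    and pendant: "\<And>y. adj E v y \<longleftrightarrow> y = u" and "proper_interval E C"
  shows "C = {u, v} \<or>
    (\<exists>l r. proper_interval_model E C l r \<and> l v < r v \<and> (\<forall>w\<in>C - {v}. r w < r v))"
proof -
  obtain l r where model: "proper_interval_model E C l r"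
    using assms(4) unfolding proper_interval_iff_model by blast
  have u: "u \<in> C"
    using component_adj_closed[OF comp v] pendant by blast
  have nest: "\<And>x y. x \<in> C \<Longrightarrow> y \<in> C \<Longrightarrow> l x \<le> l y \<Longrightarrow> r y \<le> r x \<Longrightarrow> l x = l y \<and> r x = r y"
    using model unfolding proper_interval_model_def by blast
  consider "l u < l v" | "l v < l u" | "l u = l v" "r u = r v"
    using nest[OF u v] nest[OF v u] by force
  then show ?thesis
  proof cases
    case 1
    then show ?thesis
      using pendant_rightmost[OF comp v pendant model 1] model by blast
  next
    case 2
    then have "- r u < - r v"
      using nest[OF v u] by force
    then show ?thesis
      using pendant_rightmost[OF comp v pendant proper_interval_model_mirror[OF model]]
        proper_interval_model_mirror[OF model] by blast
  next
    case 3
    then show ?thesis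
      using pendant_twin_component[OF comp v pendant model] by blast
  qed
qed

end

definition pit_components :: "'a set \<Rightarrow> ('a \<Rightarrow> 'a \<Rightarrow> nat) \<Rightarrow> bool" where
  "pit_components W E \<longleftrightarrow> (\<forall>C. component W E C \<longrightarrow> proper_interval E C \<or> is_tree E C)"

lemma pitvd_yes_iff_pit_components:
  "pitvd_yes V m k \<longleftrightarrow>
    (\<exists>X\<subseteq>V. card X \<le> k \<and> simple_mg (del_vs m X) \<and> pit_components (V - X) (del_vs m X))"
  by (simp add: pitvd_yes_def pit_components_def)

lemma pit_components_del_vs:
  assumes mg: "multigraph W E" and pit: "pit_components W E"
  shows "pit_components (W - Y) (del_vs E Y)"
  unfolding pit_components_def
proof (intro allI impI)
  fix C' assume comp': "component (W - Y) (del_vs E Y) C'"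
  then obtain v where v: "v \<in> W - Y" "C' = {u \<in> W - Y. (adj (del_vs E Y))\<^sup>*\<^sup>* v u}"
    unfolding component_def by blast
  define C where "C = {u \<in> W. (adj E)\<^sup>*\<^sup>* v u}"
  have comp: "component W E C"
    unfolding C_def using v(1) by (intro component_of) simp
  have sub: "adj (del_vs E Y) \<le> adj E"
    by (auto simp: adj_del_vs)
  have "C' \<subseteq> C"
    unfolding v(2) C_def using predicate2D[OF rtranclp_mono[OF sub]] by blast
  have agree: "adj (del_vs E Y) u w \<longleftrightarrow> adj E u w" if "u \<in> C'" "w \<in> C'" for u w
    using that v(2) by (auto simp: adj_del_vs)
  have "proper_interval E C \<or> is_tree E C"
    using pit comp unfolding pit_components_def by blast
  then show "proper_interval (del_vs E Y) C' \<or> is_tree (del_vs E Y) C'"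
  proof
    assume "proper_interval E C"
    then show ?thesis
      using proper_interval_subset \<open>C' \<subseteq> C\<close> agree by blast
  next
    assume tree: "is_tree E C"
    have "\<not> is_cycle (del_vs E Y) C' cs" for cs
      using is_cycle_mono[OF _ sub, of C' cs C] \<open>C' \<subseteq> C\<close> tree
      unfolding is_tree_def is_cycle_def by blast
    moreover have "C' \<noteq> {}"
      using v by blast
    ultimately show ?thesis
      unfolding is_tree_def using component_connected[OF multigraph_del_vs[OF mg] comp'] by blast
  qed
qed

lemma pit_components_disjoint_component:
  assumes mg: "multigraph W E" and pit: "pit_components (W - Y) (del_vs E Y)"
    and comp: "component W E C" and disj: "C \<inter> Y = {}"
  shows "proper_interval E C \<or> is_tree E C"
proof -
  have "proper_interval (del_vs E Y) C \<or> is_tree (del_vs E Y) C"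
    using pit component_del_vs_disjoint[OF mg comp disj] unfolding pit_components_def by blast
  moreover have "adj E u w \<longleftrightarrow> adj (del_vs E Y) u w" if "u \<in> C" "w \<in> C" for u w
    using that disj by (auto simp: adj_del_vs)
  ultimately show ?thesis
    using proper_interval_subset[of _ C C] is_tree_cong[of C] by blast
qed

lemma pitvd_yes_del_vs:
  assumes mg: "multigraph V m" and yes: "pitvd_yes V m k"
  shows "pitvd_yes (V - Z) (del_vs m Z) k"
proof -
  obtain X where X: "X \<subseteq> V" "card X \<le> k" "simple_mg (del_vs m X)"
    and pit: "pit_components (V - X) (del_vs m X)"
    using yes unfolding pitvd_yes_iff_pit_components by blast
  have "card (X - Z) \<le> k"
    using X(1,2) card_mono[OF finite_subset[OF X(1)], of "X - Z"] mg
    unfolding multigraph_def by auto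
  moreover have "del_vs (del_vs m Z) (X - Z) = del_vs (del_vs m X) Z"
    by (auto simp: del_vs_def fun_eq_iff)
  moreover have "simple_mg (del_vs (del_vs m X) Z)"
    using X(3) by (simp add: simple_mg_def del_vs_def)
  moreover have "pit_components (V - Z - (X - Z)) (del_vs (del_vs m X) Z)"
  proof -
    have "V - Z - (X - Z) = V - X - Z"
      by blast
    then show ?thesis
      using pit_components_del_vs[OF multigraph_del_vs[OF mg] pit, of Z] by simp
  qed
  ultimately show ?thesis
    unfolding pitvd_yes_iff_pit_components using X(1) by (metis Diff_mono order_refl)
qed

locale degree_two_tail =
  fixes V :: "'a set" and m :: "'a \<Rightarrow> 'a \<Rightarrow> nat" and P :: "'a list"
  assumes mg: "multigraph V m" and tail: "deg2_tail V m P" and long: "3 \<le> length P"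
begin

(* Indices are 0-based: P ! i is the paper's v_(i+1), so tail_from 2 is the deleted set
   Z = {v_3, ..., v_l}. *)

abbreviation tail_from :: "nat \<Rightarrow> 'a set" where
  "tail_from j \<equiv> (!) P ` {j..<length P}"

lemma distinct_tail: "distinct P"
  using tail unfolding deg2_tail_def deg2_path_def by simp

lemma nth_eq_iff: "i < length P \<Longrightarrow> j < length P \<Longrightarrow> P ! i = P ! j \<longleftrightarrow> i = j"
  using distinct_tail by (simp add: nth_eq_iff_index_eq)

lemma nth_in_tail_from: "i < length P \<Longrightarrow> P ! i \<in> tail_from j \<longleftrightarrow> j \<le> i"
  using nth_eq_iff by auto

lemma tail_from_eq_insert:
  "tail_from 0 = insert (P ! 0) (tail_from 1)" "tail_from 1 = insert (P ! 1) (tail_from 2)"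
proof -
  have "{0..<length P} = insert 0 {1..<length P}" "{1..<length P} = insert 1 {2..<length P}"
    using long by auto
  then show "tail_from 0 = insert (P ! 0) (tail_from 1)" "tail_from 1 = insert (P ! 1) (tail_from 2)"
    by (simp_all only: image_insert)
qed

lemma nth_in_V: "i < length P \<Longrightarrow> P ! i \<in> V"
  using tail unfolding deg2_tail_def deg2_path_def by auto

lemma adj_nth_Suc: "Suc i < length P \<Longrightarrow> adj m (P ! i) (P ! Suc i)"
  using tail unfolding deg2_tail_def deg2_path_def by auto

lemma deg_nth:
  assumes "0 < i" "i < length P"
  shows "deg V m (P ! i) = (if Suc i < length P then 2 else 1)"
proof (cases "Suc i < length P")
  case False
  then have "i = length P - 1" "P \<noteq> []"
    using assms by auto
  then have "P ! i = last P"
    by (simp add: last_conv_nth)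
  then show ?thesis
    using tail False unfolding deg2_tail_def by simp
qed (use tail assms in \<open>simp add: deg2_tail_def deg2_path_def\<close>)

lemma mult_nth:
  assumes i: "0 < i" "i < length P"
  shows "m (P ! i) y = (if y \<in> (!) P ` ({i - 1, Suc i} \<inter> {..<length P}) then 1 else 0)"
proof (rule mult_eq_indicator_if_deg_le[OF mg])
  show "(!) P ` ({i - 1, Suc i} \<inter> {..<length P}) \<subseteq> V"
    using nth_in_V by auto
  show "adj m (P ! i) y" if "y \<in> (!) P ` ({i - 1, Suc i} \<inter> {..<length P})" for y
    using that i adj_nth_Suc[of "i - 1"] adj_nth_Suc[of i] adj_commute[OF mg] by auto
  have "card ((!) P ` ({i - 1, Suc i} \<inter> {..<length P})) = card ({i - 1, Suc i} \<inter> {..<length P})"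
    by (intro card_image inj_on_nth distinct_tail) auto
  also have "\<dots> = deg V m (P ! i)"
    using i by (auto simp: deg_nth)
  finally show "deg V m (P ! i) \<le> card ((!) P ` ({i - 1, Suc i} \<inter> {..<length P}))"
    by simp
qed

lemma mult_nth_le_1: "0 < i \<Longrightarrow> i < length P \<Longrightarrow> m (P ! i) y \<le> 1"
  by (simp add: mult_nth)

lemma adj_nth_iff:
  assumes "0 < i" "i < length P"
  shows "adj m (P ! i) y \<longleftrightarrow> (\<exists>j<length P. (i = Suc j \<or> j = Suc i) \<and> y = P ! j)"
proof -
  have "{i - 1, Suc i} = {j. i = Suc j \<or> j = Suc i}"
    using assms(1) by auto
  then show ?thesis
    using assms by (auto simp: adj_def mult_nth image_iff)
qed

lemma adj_nth_nth:
  assumes "i < length P" "j < length P"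
  shows "adj m (P ! i) (P ! j) \<longleftrightarrow> i = Suc j \<or> j = Suc i"
proof -
  have inner: "adj m (P ! i) (P ! j) \<longleftrightarrow> i = Suc j \<or> j = Suc i"
    if "0 < i" "i < length P" "j < length P" for i j
    using adj_nth_iff[OF that(1,2), of "P ! j"] nth_eq_iff that by auto
  consider "0 < i" | "0 < j" | "i = 0" "j = 0"
    by blast
  then show ?thesis
  proof cases
    case 2
    then show ?thesis
      using inner[of j i] assms adj_commute[OF mg] by auto
  qed (use inner assms adj_irrefl[OF mg] in auto)
qed

lemma nth_not_on_cycle:
  assumes "0 < i" "i < length P" "is_cycle m C cs"
  shows "P ! i \<notin> set cs"
  using assms(1,2)
proof (induction "length P - i" arbitrary: i rule: less_induct)
  case less
  show ?case
  proof
    assume "P ! i \<in> set cs"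
    then obtain a b where "a \<in> set cs" "b \<in> set cs" "a \<noteq> b" "adj m (P ! i) a" "adj m (P ! i) b"
      using is_cycle_two_neighbours[OF assms(3)] adj_commute[OF mg] by blast
    then have "Suc i < length P" "P ! Suc i \<in> set cs"
      using adj_nth_iff[OF less.prems] by auto
    moreover have "length P - Suc i < length P - i"
      using \<open>Suc i < length P\<close> by simp
    ultimately show False
      using less.hyps by blast
  qed
qed

lemma adj_tail_from:
  assumes "0 < j" "x \<in> tail_from j" "adj m x y"
  shows "y \<in> tail_from (j - 1)"
proof -
  from assms(2) obtain i where i: "i \<in> {j..<length P}" "x = P ! i"
    by (rule imageE)
  then obtain t where "t < length P" "i = Suc t \<or> t = Suc i" "y = P ! t"
    using adj_nth_iff[of i y] assms(1,3) by auto
  then show ?thesis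
    using i by auto
qed

lemma reach_along_tail:
  assumes "X \<inter> tail_from j = {}" "j \<le> i" "i < length P"
  shows "(adj (del_vs m X))\<^sup>*\<^sup>* (P ! j) (P ! i)"
  using assms(2,3)
proof (induction i)
  case (Suc i)
  show ?case
  proof (cases "j = Suc i")
    case False
    then have "(adj (del_vs m X))\<^sup>*\<^sup>* (P ! j) (P ! i)"
      using Suc by simp
    moreover have "P ! i \<notin> X" "P ! Suc i \<notin> X"
      using assms(1) Suc.prems False by (auto simp: disjoint_iff)
    then have "adj (del_vs m X) (P ! i) (P ! Suc i)"
      using adj_nth_Suc[OF Suc.prems(2)] by (simp add: adj_del_vs)
    ultimately show ?thesis
      by (rule rtranclp.rtrancl_into_rtrancl)
  qed simp
qed simp

lemma tail_from_model:
  assumes "X \<inter> tail_from j = {}"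
  shows "proper_interval_model (del_vs m X) (tail_from j)
    (\<lambda>x. c + real (inv_into {j..<length P} ((!) P) x))
    (\<lambda>x. c + real (inv_into {j..<length P} ((!) P) x) + 1)"
  by (rule path_interval_model)
    (use assms adj_nth_nth in \<open>auto simp: adj_del_vs disjoint_iff intro: inj_on_nth distinct_tail\<close>)

lemma proper_interval_tail_from:
  "X \<inter> tail_from j = {} \<Longrightarrow> proper_interval (del_vs m X) (tail_from j)"
  using tail_from_model unfolding proper_interval_iff_model by blast

lemma component_tail_from:
  assumes j: "0 < j" "j < length P" and cut: "P ! (j - 1) \<in> X"
    and avoid: "X \<inter> tail_from j = {}"
    and comp: "component (V - X) (del_vs m X) C" and meet: "z \<in> C" "z \<in> tail_from j"
  shows "C = tail_from j"
proof (rule component_eqI[OF multigraph_del_vs[OF mg] comp meet])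
  show "P ! j \<in> tail_from j"
    using j by simp
  show "y \<in> tail_from j" if "x \<in> tail_from j" "adj (del_vs m X) x y" for x y
  proof -
    have "y \<in> tail_from (j - 1)"
      using adj_tail_from[OF j(1) that(1)] that(2) by (simp add: adj_del_vs)
    then obtain t where t: "t \<in> {j - 1..<length P}" "y = P ! t"
      by (rule imageE)
    moreover have "t \<noteq> j - 1"
      using t that(2) cut by (auto simp: adj_del_vs)
    ultimately show ?thesis
      by auto
  qed
  show "(adj (del_vs m X))\<^sup>*\<^sup>* (P ! j) a" if "a \<in> tail_from j" for a
    using that reach_along_tail[OF avoid] by auto
qed

lemma simple_mg_restore:
  assumes simple: "simple_mg (del_vs m (tail_from 2 \<union> X))"
  shows "simple_mg (del_vs m X)"
  unfolding simple_mg_def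
proof (intro allI)
  fix u v
  show "del_vs m X u v \<le> 1"
  proof (cases "u \<in> X \<or> v \<in> X")
    case False
    then have uv: "del_vs m X u v = m u v"
      by (simp add: del_vs_def)
    consider (u) i where "i \<in> {2..<length P}" "u = P ! i"
      | (v) i where "i \<in> {2..<length P}" "v = P ! i"
      | (neither) "u \<notin> tail_from 2" "v \<notin> tail_from 2"
      by blast
    then show ?thesis
    proof cases
      case u
      then show ?thesis
        using uv mult_nth_le_1[of i v] by simp
    next
      case v
      moreover have "m u v = m v u"
        using mg unfolding multigraph_def by simp
      ultimately show ?thesis
        using uv mult_nth_le_1[of i u] by simp
    next
      case neither
      then have "del_vs m (tail_from 2 \<union> X) u v = m u v"
        using False by (simp add: del_vs_def)
      then show ?thesis
        using uv simple unfolding simple_mg_def by metis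
    qed
  qed (auto simp: del_vs_def)
qed

lemma pendant_second:
  assumes "P ! 0 \<notin> X" "P ! 1 \<notin> X"
  shows "adj (del_vs m (tail_from 2 \<union> X)) (P ! 1) y \<longleftrightarrow> y = P ! 0"
proof -
  have lens: "0 < length P" "1 < length P" "Suc 1 < length P"
    using long by auto
  have "adj m (P ! 1) y \<longleftrightarrow> y = P ! 0 \<or> y = P ! 2"
  proof
    assume "adj m (P ! 1) y"
    then obtain j where "1 = Suc j \<or> j = Suc 1" "y = P ! j"
      using adj_nth_iff[of 1 y] lens by auto
    then show "y = P ! 0 \<or> y = P ! 2"
      by (auto simp: numeral_2_eq_2)
  next
    have "adj m (P ! 1) (P ! 0)"
      using adj_nth_Suc[of 0] lens adj_commute[OF mg] by simp
    moreover have "adj m (P ! 1) (P ! 2)"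
      using adj_nth_Suc[OF lens(3)] unfolding Suc_1 .
    ultimately show "y = P ! 0 \<or> y = P ! 2 \<Longrightarrow> adj m (P ! 1) y"
      by blast
  qed
  moreover have "P ! 0 \<notin> tail_from 2" "P ! 1 \<notin> tail_from 2" "P ! 2 \<in> tail_from 2"
    using nth_in_tail_from lens by simp_all
  ultimately show ?thesis
    using assms unfolding adj_del_vs by auto
qed

lemma adj_into_tail_iff:
  assumes X: "X \<inter> tail_from 2 = {}" "P ! 1 \<notin> X"
    and a: "a \<notin> tail_from 2" and i: "i \<in> {2..<length P}"
  shows "adj (del_vs m X) a (P ! i) \<longleftrightarrow> a = P ! 1 \<and> i = 2"
proof
  assume "adj (del_vs m X) a (P ! i)"
  then have "adj m (P ! i) a"
    using adj_commute[OF mg] by (simp add: adj_del_vs)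
  then obtain t where t: "t < length P" "i = Suc t \<or> t = Suc i" "a = P ! t"
    using adj_nth_iff[of i a] i by auto
  then have "t < 2"
    using a nth_in_tail_from by auto
  then have "t = 1"
    using t(2) i by auto
  then show "a = P ! 1 \<and> i = 2"
    using t i by auto
next
  assume "a = P ! 1 \<and> i = 2"
  then show "adj (del_vs m X) a (P ! i)"
    using adj_nth_nth[of 1 2] long X i by (auto simp: adj_del_vs)
qed

lemma component_attached:
  assumes X: "X \<inter> tail_from 2 = {}" "P ! 1 \<notin> X"
    and comp0: "component (V - (tail_from 2 \<union> X)) (del_vs m (tail_from 2 \<union> X)) C0" "P ! 1 \<in> C0"
    and comp: "component (V - X) (del_vs m X) C" "z \<in> C" "z \<in> tail_from 2"
  shows "C = C0 \<union> tail_from 2"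
proof -
  let ?E' = "del_vs m (tail_from 2 \<union> X)"
  have members: "z \<in> C0 \<union> tail_from 2" "P ! 1 \<in> C0 \<union> tail_from 2"
    using comp(3) comp0(2) by simp_all
  have closed: "y \<in> C0 \<union> tail_from 2"
    if x: "x \<in> C0 \<union> tail_from 2" and xy: "adj (del_vs m X) x y" for x y
  proof (cases "x \<in> tail_from 2")
    case True
    then have "y \<in> tail_from 1"
      using adj_tail_from[of 2 x y] xy by (simp add: adj_del_vs)
    then show ?thesis
      using comp0(2) tail_from_eq_insert(2) by auto
  next
    case False
    then have "adj ?E' x y" if "y \<notin> tail_from 2"
      using xy that by (auto simp: adj_del_vs)
    then show ?thesis
      using component_adj_closed[OF multigraph_del_vs[OF mg] comp0(1)] x False by blast
  qed
  have avoid: "X \<inter> tail_from 1 = {}"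
    using X tail_from_eq_insert(2) by simp
  have sub: "adj ?E' \<le> adj (del_vs m X)"
    by (auto simp: adj_del_vs)
  have reach: "(adj (del_vs m X))\<^sup>*\<^sup>* (P ! 1) a" if a: "a \<in> C0 \<union> tail_from 2" for a
  proof (cases "a \<in> C0")
    case True
    have "(adj ?E')\<^sup>*\<^sup>* (P ! 1) a"
      using component_eq_reach[OF multigraph_del_vs[OF mg] comp0] True by blast
    then show ?thesis
      by (rule predicate2D[OF rtranclp_mono[OF sub]])
  next
    case False
    with a obtain i where "i \<in> {2..<length P}" "a = P ! i"
      by blast
    then show ?thesis
      using reach_along_tail[OF avoid, of i] by simp
  qed
  show ?thesis
    by (rule component_eqI[OF multigraph_del_vs[OF mg] comp(1,2) members closed reach])
qed

lemma is_tree_attached: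
  assumes comp: "component (V - X) (del_vs m X) C" and C: "C = C0 \<union> tail_from 2"
    and C0: "C0 \<inter> tail_from 2 = {}" and tree: "is_tree (del_vs m (tail_from 2 \<union> X)) C0"
  shows "is_tree (del_vs m X) C"
  unfolding is_tree_def
proof (intro conjI)
  show "C \<noteq> {}"
    using C long by auto
  show "\<forall>u\<in>C. \<forall>w\<in>C. (\<lambda>x y. x \<in> C \<and> y \<in> C \<and> adj (del_vs m X) x y)\<^sup>*\<^sup>* u w"
    using component_connected[OF multigraph_del_vs[OF mg] comp] by blast
  show "\<nexists>cs. is_cycle (del_vs m X) C cs"
  proof
    assume "\<exists>cs. is_cycle (del_vs m X) C cs"
    then obtain cs where cyc: "is_cycle (del_vs m X) C cs"
      by blast
    have "adj (del_vs m X) \<le> adj m"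
      by (auto simp: adj_del_vs)
    then have "is_cycle m C cs"
      using is_cycle_mono[OF cyc] cyc unfolding is_cycle_def by blast
    then have "set cs \<inter> tail_from 2 = {}"
      using nth_not_on_cycle by fastforce
    then have "set cs \<subseteq> C0"
      using cyc C unfolding is_cycle_def by blast
    then have "is_cycle (del_vs m X) C0 cs"
      using is_cycle_mono[OF cyc order_refl] by blast
    moreover have "adj (del_vs m (tail_from 2 \<union> X)) u w \<longleftrightarrow> adj (del_vs m X) u w"
      if "u \<in> C0" "w \<in> C0" for u w
      using that C0 by (auto simp: adj_del_vs)
    ultimately have "is_cycle (del_vs m (tail_from 2 \<union> X)) C0 cs"
      using is_cycle_cong by blast
    then show False
      using tree unfolding is_tree_def by blast
  qed
qed

lemma proper_interval_attached_rightmost: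
  assumes X: "X \<inter> tail_from 2 = {}" "P ! 1 \<notin> X"
    and C0: "C0 \<inter> tail_from 2 = {}" "P ! 1 \<in> C0"
    and model: "proper_interval_model (del_vs m (tail_from 2 \<union> X)) C0 l r"
    and rightmost: "l (P ! 1) < r (P ! 1)" "\<forall>w\<in>C0 - {P ! 1}. r w < r (P ! 1)"
  shows "proper_interval (del_vs m X) (C0 \<union> tail_from 2)"
proof -
  let ?b = "r (P ! 1)"
  define pos where "pos = inv_into {2..<length P} ((!) P)"
  define l' where "l' x = (if x \<in> tail_from 2 then ?b - 2 + real (pos x) else l x)" for x
  define r' where "r' x = (if x \<in> tail_from 2 then ?b - 2 + real (pos x) + 1 else r x)" for x
  have pos: "pos (P ! i) = i" if "i \<in> {2..<length P}" for i
    unfolding pos_def using that by (intro inv_into_f_f inj_on_nth distinct_tail) auto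
  have right: "r a < ?b" if "a \<in> C0" "a \<noteq> P ! 1" for a
    using rightmost(2) that by blast
  have bounds: "l a < ?b \<and> r a \<le> ?b" if a: "a \<in> C0" for a
  proof (cases "a = P ! 1")
    case False
    moreover have "l a \<le> r a"
      using model a unfolding proper_interval_model_def by blast
    ultimately show ?thesis
      using right[OF a] by force
  qed (use rightmost(1) in simp)
  have "proper_interval_model (del_vs m X) C0 l' r'"
    by (rule proper_interval_model_cong[OF model]) (use C0 in \<open>auto simp: adj_del_vs l'_def r'_def\<close>)
  moreover have "proper_interval_model (del_vs m X) (tail_from 2) l' r'"
    by (rule proper_interval_model_cong[OF tail_from_model[OF X(1), of "?b - 2"]])
      (auto simp: l'_def r'_def pos_def)
  moreover have "adj (del_vs m X) a (P ! i) \<longleftrightarrow> l' (P ! i) \<le> r' a"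
    if a: "a \<in> C0" and i: "i \<in> {2..<length P}" for a i
  proof -
    have "a \<notin> tail_from 2"
      using a C0 by blast
    moreover have "?b - 2 + real i \<le> r a \<longleftrightarrow> a = P ! 1 \<and> i = 2"
    proof (cases "a = P ! 1")
      case False
      then show ?thesis
        using right[OF a False] i by auto
    qed (use i in auto)
    ultimately show ?thesis
      using adj_into_tail_iff[OF X _ i] i by (auto simp: l'_def r'_def pos)
  qed
  moreover have "l' a < l' (P ! i) \<and> r' a < r' (P ! i)"
    if a: "a \<in> C0" and i: "i \<in> {2..<length P}" for a i
    using bounds[OF a] a i C0 by (auto simp: l'_def r'_def pos)
  ultimately have "proper_interval_model (del_vs m X) (C0 \<union> tail_from 2) l' r'"
    by (intro proper_interval_model_Un) (auto simp: adj_commute[OF multigraph_del_vs[OF mg]])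
  then show ?thesis
    unfolding proper_interval_iff_model by blast
qed

lemma proper_interval_attached:
  assumes X: "X \<inter> tail_from 2 = {}" "P ! 0 \<notin> X" "P ! 1 \<notin> X"
    and comp0: "component (V - (tail_from 2 \<union> X)) (del_vs m (tail_from 2 \<union> X)) C0" "P ! 1 \<in> C0"
    and pi: "proper_interval (del_vs m (tail_from 2 \<union> X)) C0"
  shows "proper_interval (del_vs m X) (C0 \<union> tail_from 2)"
proof -
  have C0Z: "C0 \<inter> tail_from 2 = {}"
    using comp0(1) unfolding component_def by blast
  from pendant_interval_model[OF multigraph_del_vs[OF mg] comp0 pendant_second[OF X(2,3)] pi]
  consider "C0 = {P ! 0, P ! 1}"
    | l r where "proper_interval_model (del_vs m (tail_from 2 \<union> X)) C0 l r"
        "l (P ! 1) < r (P ! 1)" "\<forall>w\<in>C0 - {P ! 1}. r w < r (P ! 1)"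
    by blast
  then show ?thesis
  proof cases
    case 1
    have "tail_from 0 = {P ! 0, P ! 1} \<union> tail_from 2"
      using tail_from_eq_insert by simp
    then have "C0 \<union> tail_from 2 = tail_from 0" and "X \<inter> tail_from 0 = {}"
      using 1 X by auto
    then show ?thesis
      using proper_interval_tail_from by simp
  next
    case 2
    then show ?thesis
      using proper_interval_attached_rightmost[OF X(1,3) C0Z comp0(2)] by blast
  qed
qed

lemma pit_component_attached:
  assumes X: "X \<inter> tail_from 2 = {}" "P ! 0 \<notin> X" "P ! 1 \<notin> X"
    and pit: "pit_components (V - (tail_from 2 \<union> X)) (del_vs m (tail_from 2 \<union> X))"
    and comp: "component (V - X) (del_vs m X) C" "z \<in> C" "z \<in> tail_from 2"
  shows "proper_interval (del_vs m X) C \<or> is_tree (del_vs m X) C"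
proof -
  let ?W' = "V - (tail_from 2 \<union> X)" and ?E' = "del_vs m (tail_from 2 \<union> X)"
  define C0 where "C0 = {u \<in> ?W'. (adj ?E')\<^sup>*\<^sup>* (P ! 1) u}"
  have "P ! 1 \<in> ?W'"
    using X long nth_in_V nth_in_tail_from[of 1 2] by simp
  then have comp0: "component ?W' ?E' C0"
    unfolding C0_def by (rule component_of)
  have "P ! 1 \<in> C0"
    unfolding C0_def using \<open>P ! 1 \<in> ?W'\<close> by simp
  have C: "C = C0 \<union> tail_from 2"
    using component_attached[OF X(1,3) comp0 \<open>P ! 1 \<in> C0\<close> comp] .
  have "proper_interval ?E' C0 \<or> is_tree ?E' C0"
    using pit comp0 unfolding pit_components_def by blast
  moreover have "C0 \<inter> tail_from 2 = {}"
    unfolding C0_def by blast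
  ultimately show ?thesis
    using is_tree_attached[OF comp(1) C] proper_interval_attached[OF X comp0 \<open>P ! 1 \<in> C0\<close>] C
    by blast
qed

lemma pit_components_restore:
  assumes X: "X \<inter> tail_from 2 = {}"
    and pit: "pit_components (V - (tail_from 2 \<union> X)) (del_vs m (tail_from 2 \<union> X))"
  shows "pit_components (V - X) (del_vs m X)"
  unfolding pit_components_def
proof (intro allI impI)
  fix C assume comp: "component (V - X) (del_vs m X) C"
  consider (away) "C \<inter> tail_from 2 = {}"
    | (cut) j z where "j \<in> {1, 2}" "z \<in> C" "z \<in> tail_from 2" "P ! (j - 1) \<in> X"
        "X \<inter> tail_from j = {}"
    | (attached) z where "z \<in> C" "z \<in> tail_from 2" "P ! 0 \<notin> X" "P ! 1 \<notin> X"
    using X tail_from_eq_insert(2) by (cases "P ! 1 \<in> X") fastforce+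
  then show "proper_interval (del_vs m X) C \<or> is_tree (del_vs m X) C"
  proof cases
    case away
    have "V - X - tail_from 2 = V - (tail_from 2 \<union> X)"
      by blast
    then show ?thesis
      using pit_components_disjoint_component[OF multigraph_del_vs[OF mg] _ comp away] pit
      by (simp add: del_vs_del_vs Un_commute)
  next
    case cut
    then have "z \<in> tail_from j"
      using tail_from_eq_insert(2) by auto
    then have "C = tail_from j"
      using component_tail_from[OF _ _ cut(4,5) comp cut(2)] cut(1) long by auto
    then show ?thesis
      using proper_interval_tail_from[OF cut(5)] by simp
  next
    case attached
    then show ?thesis
      using pit_component_attached[OF X _ _ pit comp] by blast
  qed
qed

lemma pitvd_yes_restore:
  assumes "pitvd_yes (V - tail_from 2) (del_vs m (tail_from 2)) k"
  shows "pitvd_yes V m k"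
proof -
  have "V - tail_from 2 - X = V - (tail_from 2 \<union> X)" for X
    by blast
  then obtain X where X: "X \<subseteq> V - tail_from 2" "card X \<le> k"
    and simple: "simple_mg (del_vs m (tail_from 2 \<union> X))"
    and pit: "pit_components (V - (tail_from 2 \<union> X)) (del_vs m (tail_from 2 \<union> X))"
    using assms unfolding pitvd_yes_iff_pit_components del_vs_del_vs by auto
  then have "X \<subseteq> V" "X \<inter> tail_from 2 = {}"
    by auto
  then show ?thesis
    unfolding pitvd_yes_iff_pit_components
    using X(2) simple_mg_restore[OF simple] pit_components_restore[OF _ pit] by blast
qed

end

theorem lemma16:
  fixes V :: "'a set" and m :: "'a \<Rightarrow> 'a \<Rightarrow> nat" and k :: nat and P :: "'a list"
  assumes "multigraph V m"
    and "deg2_tail V m P"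
    and "3 \<le> length P"
  shows "pitvd_yes V m k \<longleftrightarrow>
         pitvd_yes (V - set (drop 2 P)) (del_vs m (set (drop 2 P))) k"
proof -
  interpret degree_two_tail V m P
    using assms by unfold_locales
  show ?thesis
    unfolding set_drop_eq_nth_image
    using pitvd_yes_del_vs[OF assms(1)] pitvd_yes_restore by blast
qed

end
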